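(* Let $F=\{f_i\}_{i=1}^N$ be a tight frame for an $n$-dimensional Hilbert space $\mathcal{H}_n$ and let $p>1$. If $S_F^{-1}F\in\zeta_{\mathfrak{R}}^{(1),p}(F)$, then $S_F^{-1}F\in\zeta_{\mathcal{N}}^{(1),p}(F)$.
   Context: $F$ is tight if $\sum_i|\langle f,f_i\rangle|^2=A\|f\|^2$ for all $f$ and some $A>0$; $S_F$ is the frame operator and $S_F^{-1}F=\{S_F^{-1}f_i\}$ the canonical dual. $G=\{g_i\}$ is a dual of $F$ if $f=\sum_i\langle f,f_i\rangle g_i$ for all $f$. For a dual $G$ let $E_if=\langle f,f_i\rangle g_i$. Define $\mathrm{AE}_{\mathfrak{R}}^{(1),p}(F,G)=\{\frac1N\sum_i\rho(E_i)^p\}^{1/p}=\{\frac1N\sum_i|\langle f_i,g_i\rangle|^p\}^{1/p}$ ($\rho$ = spectral radius) and $\mathrm{AE}_{\mathcal{N}}^{(1),p}(F,G)=\{\frac1N\sum_i\omega(E_i)^p\}^{1/p}$ where $\omega(T)=\sup_{\|f\|=1}|\langle Tf,f\rangle|$ is the numerical radius (so $\omega(E_i)=\frac{|\langle f_i,g_i\rangle|+\|f_i\|\|g_i\|}2$). $\zeta_{\mathfrak{R}}^{(1),p}(F)$ (resp. $\zeta_{\mathcal{N}}^{(1),p}(F)$) is the set of duals minimizing $\mathrm{AE}_{\mathfrak{R}}^{(1),p}(F,\cdot)$ (resp. $\mathrm{AE}_{\mathcal{N}}^{(1),p}(F,\cdot)$) over all duals of $F$. *)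

theory Defs
  imports "HOL-Analysis.Analysis"
begin

text \<open>The n-dimensional (complex) Hilbert space H_n is modelled as complex ^ 'n,
  with n = CARD('n), and the standard inner product (linear in the first argument).\<close>

definition hinner :: "complex ^ 'n \<Rightarrow> complex ^ 'n \<Rightarrow> complex" where
  "hinner x y = (\<Sum>k\<in>UNIV. x $ k * cnj (y $ k))"

definition hnorm :: "complex ^ 'n \<Rightarrow> real" where
  "hnorm x = sqrt (Re (hinner x x))"

text \<open>Finite sequences F = {f_i}, i = 0..N-1.\<close>

definition is_frame :: "(nat \<Rightarrow> complex ^ 'n) \<Rightarrow> nat \<Rightarrow> bool" where
  "is_frame f N \<longleftrightarrow> (\<exists>A B. 0 < A \<and> A \<le> B \<and>
     (\<forall>x. A * (hnorm x)\<^sup>2 \<le> (\<Sum>i<N. (cmod (hinner x (f i)))\<^sup>2) \<and>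
          (\<Sum>i<N. (cmod (hinner x (f i)))\<^sup>2) \<le> B * (hnorm x)\<^sup>2))"

definition is_tight_frame :: "(nat \<Rightarrow> complex ^ 'n) \<Rightarrow> nat \<Rightarrow> bool" where
  "is_tight_frame f N \<longleftrightarrow> (\<exists>A>0. \<forall>x. (\<Sum>i<N. (cmod (hinner x (f i)))\<^sup>2) = A * (hnorm x)\<^sup>2)"

definition frame_op :: "(nat \<Rightarrow> complex ^ 'n) \<Rightarrow> nat \<Rightarrow> complex ^ 'n \<Rightarrow> complex ^ 'n" where
  "frame_op f N x = (\<Sum>i<N. hinner x (f i) *s f i)"

definition canon_dual :: "(nat \<Rightarrow> complex ^ 'n) \<Rightarrow> nat \<Rightarrow> nat \<Rightarrow> complex ^ 'n" where
  "canon_dual f N i = inv (frame_op f N) (f i)"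

definition is_dual :: "(nat \<Rightarrow> complex ^ 'n) \<Rightarrow> (nat \<Rightarrow> complex ^ 'n) \<Rightarrow> nat \<Rightarrow> bool" where
  "is_dual f g N \<longleftrightarrow> (\<forall>x. x = (\<Sum>i<N. hinner x (f i) *s g i))"

definition E_op :: "(nat \<Rightarrow> complex ^ 'n) \<Rightarrow> (nat \<Rightarrow> complex ^ 'n) \<Rightarrow> nat \<Rightarrow> complex ^ 'n \<Rightarrow> complex ^ 'n" where
  "E_op f g i x = hinner x (f i) *s g i"

text \<open>Spectral radius (finite dimensions: spectrum = set of eigenvalues).\<close>
definition spec_rad :: "(complex ^ 'n \<Rightarrow> complex ^ 'n) \<Rightarrow> real" where
  "spec_rad T = Sup {cmod l | l. \<exists>x. x \<noteq> 0 \<and> T x = l *s x}"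

definition num_rad :: "(complex ^ 'n \<Rightarrow> complex ^ 'n) \<Rightarrow> real" where
  "num_rad T = Sup {cmod (hinner (T x) x) | x. hnorm x = 1}"

definition AE_R :: "real \<Rightarrow> (nat \<Rightarrow> complex ^ 'n) \<Rightarrow> (nat \<Rightarrow> complex ^ 'n) \<Rightarrow> nat \<Rightarrow> real" where
  "AE_R p f g N = ((1 / real N) * (\<Sum>i<N. spec_rad (E_op f g i) powr p)) powr (1 / p)"

definition AE_N :: "real \<Rightarrow> (nat \<Rightarrow> complex ^ 'n) \<Rightarrow> (nat \<Rightarrow> complex ^ 'n) \<Rightarrow> nat \<Rightarrow> real" where
  "AE_N p f g N = ((1 / real N) * (\<Sum>i<N. num_rad (E_op f g i) powr p)) powr (1 / p)"

definition zeta_R :: "real \<Rightarrow> (nat \<Rightarrow> complex ^ 'n) \<Rightarrow> nat \<Rightarrow> (nat \<Rightarrow> complex ^ 'n) set" where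
  "zeta_R p f N = {g. is_dual f g N \<and> (\<forall>h. is_dual f h N \<longrightarrow> AE_R p f g N \<le> AE_R p f h N)}"

definition zeta_N :: "real \<Rightarrow> (nat \<Rightarrow> complex ^ 'n) \<Rightarrow> nat \<Rightarrow> (nat \<Rightarrow> complex ^ 'n) set" where
  "zeta_N p f N = {g. is_dual f g N \<and> (\<forall>h. is_dual f h N \<longrightarrow> AE_N p f g N \<le> AE_N p f h N)}"

end

theory Submission
  imports Defs
begin

text \<open>For a tight frame with bound A the quadratic form of the frame operator is A times the squared
  norm, so by polarization S_F = A I and the canonical dual is f_i / A.  Each E_i is then the positive
  rank-one operator x \<mapsto> <x, f_i> f_i / A: its numerical radius is attained at the eigenvector f_i
  and equals its spectral radius |f_i|^2 / A.  For every dual G the spectral radius of E_i is at most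
  its numerical radius, since an eigenvalue l with unit eigenvector x equals <E_i x, x>.  Hence
  AE_N(F, S^-1 F) = AE_R(F, S^-1 F) \<le> AE_R(F, G) \<le> AE_N(F, G); of p > 1 only p > 0 is used.\<close>

lemma hinner_add_left: "hinner (x + y) z = hinner x z + hinner y z"
  by (simp add: hinner_def distrib_right sum.distrib)

lemma hinner_add_right: "hinner z (x + y) = hinner z x + hinner z y"
  by (simp add: hinner_def distrib_left sum.distrib)

lemma hinner_diff_left: "hinner (x - y) z = hinner x z - hinner y z"
  by (simp add: hinner_def left_diff_distrib sum_subtractf)

lemma hinner_scale_left: "hinner (c *s x) y = c * hinner x y"
  by (simp add: hinner_def sum_distrib_left mult.assoc)

lemma hinner_scale_right: "hinner x (c *s y) = cnj c * hinner x y"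
  by (simp add: hinner_def sum_distrib_left algebra_simps)

lemma hinner_sum_left: "finite I \<Longrightarrow> hinner (\<Sum>i\<in>I. u i) y = (\<Sum>i\<in>I. hinner (u i) y)"
  by (induction I rule: finite_induct) (auto simp: hinner_add_left, simp add: hinner_def)

lemma hinner_commute: "hinner y x = cnj (hinner x y)"
  by (simp add: hinner_def mult.commute)

lemma hinner_self: "hinner x x = of_real ((norm x)\<^sup>2)"
proof -
  have "hinner x x = (\<Sum>k\<in>UNIV. of_real ((cmod (x $ k))\<^sup>2))"
    unfolding hinner_def by (simp add: complex_norm_square[symmetric])
  also have "\<dots> = of_real ((norm x)\<^sup>2)"
    by (simp add: norm_vec_def L2_set_def sum_nonneg)
  finally show ?thesis .
qed

lemma hnorm_eq_norm: "hnorm x = norm x"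
  by (simp add: hnorm_def hinner_self)

lemma hinner_Cauchy_Schwarz: "cmod (hinner x y) \<le> norm x * norm y"
proof -
  have "cmod (hinner x y) \<le> (\<Sum>k\<in>UNIV. \<bar>cmod (x $ k)\<bar> * \<bar>cmod (y $ k)\<bar>)"
    unfolding hinner_def by (rule order_trans[OF norm_sum]) (simp add: norm_mult)
  also have "\<dots> \<le> norm x * norm y"
    unfolding norm_vec_def by (rule L2_set_mult_ineq)
  finally show ?thesis .
qed

lemma quadratic_form_zero_imp_zero:
  fixes T :: "complex ^ 'n \<Rightarrow> complex ^ 'n"
  assumes add: "\<And>x y. T (x + y) = T x + T y" and scale: "\<And>c x. T (c *s x) = c *s T x"
    and quad: "\<And>x. hinner (T x) x = 0"
  shows "T x = 0"
proof -
  have sym: "hinner (T x) y + hinner (T y) x = 0" for x y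
    using quad[of "x + y"] quad[of x] quad[of y]
    by (simp add: add hinner_add_left hinner_add_right add.commute)
  have "hinner (T x) y = 0" for y
  proof -
    have "hinner (T x) (\<i> *s y) + hinner (T (\<i> *s y)) x = 0" by (rule sym)
    then have "- \<i> * hinner (T x) y + \<i> * hinner (T y) x = 0"
      by (simp add: scale hinner_scale_left hinner_scale_right)
    moreover have "hinner (T y) x = - hinner (T x) y"
      using sym[of x y] by (simp add: add_eq_0_iff)
    ultimately have "(- 2 * \<i>) * hinner (T x) y = 0" by (simp add: algebra_simps)
    then show ?thesis by simp
  qed
  then have "norm (T x) = 0" using hinner_self[of "T x"] by simp
  then show ?thesis by simp
qed

lemma frame_op_add: "frame_op f N (x + y) = frame_op f N x + frame_op f N y"
  by (simp add: frame_op_def hinner_add_left vector_sadd_rdistrib sum.distrib)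

lemma frame_op_scale: "frame_op f N (c *s x) = c *s frame_op f N x"
  by (simp add: frame_op_def hinner_scale_left vec_eq_iff sum_distrib_left mult.assoc)

lemma hinner_frame_op_self:
  "hinner (frame_op f N x) x = of_real (\<Sum>i<N. (cmod (hinner x (f i)))\<^sup>2)"
proof -
  have "hinner (frame_op f N x) x = (\<Sum>i<N. hinner x (f i) * cnj (hinner x (f i)))"
    unfolding frame_op_def
    by (simp add: hinner_sum_left hinner_scale_left hinner_commute[of "f _"])
  then show ?thesis by (simp add: complex_norm_square[symmetric])
qed

lemma frame_op_tight:
  assumes "\<And>x. (\<Sum>i<N. (cmod (hinner x (f i)))\<^sup>2) = A * (hnorm x)\<^sup>2"
  shows "frame_op f N x = of_real A *s x"
proof -
  let ?T = "\<lambda>x. frame_op f N x - of_real A *s x"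
  have "?T x = 0"
  proof (rule quadratic_form_zero_imp_zero[where T = ?T])
    show "?T (x + y) = ?T x + ?T y" for x y
      by (simp add: frame_op_add vector_add_ldistrib)
    show "?T (c *s x) = c *s ?T x" for c x
      by (simp add: frame_op_scale vec_eq_iff algebra_simps)
    show "hinner (?T x) x = 0" for x
      by (simp add: hinner_diff_left hinner_scale_left hinner_frame_op_self assms hinner_self hnorm_eq_norm)
  qed
  then show ?thesis by simp
qed

lemma canon_dual_tight_frame:
  assumes "is_tight_frame f N"
  obtains c :: real where "c > 0" and "\<And>i. canon_dual f N i = of_real c *s f i"
proof -
  obtain A where "A > 0" and A: "\<And>x. (\<Sum>i<N. (cmod (hinner x (f i)))\<^sup>2) = A * (hnorm x)\<^sup>2"
    using assms unfolding is_tight_frame_def by blast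
  have S: "frame_op f N = (\<lambda>x. of_real A *s x)"
    using frame_op_tight[OF A] by blast
  have "inj (frame_op f N)"
    unfolding S using \<open>A > 0\<close> by (intro injI) simp
  then have "canon_dual f N i = of_real (1 / A) *s f i" for i
    unfolding canon_dual_def
    by (rule inv_f_eq) (use \<open>A > 0\<close> in \<open>simp add: S vector_smult_assoc\<close>)
  with \<open>A > 0\<close> show thesis by (intro that[of "1 / A"]) auto
qed

lemma numerical_range_nonempty:
  fixes T :: "complex ^ 'n \<Rightarrow> complex ^ 'n"
  shows "{cmod (hinner (T x) x) | x. hnorm x = 1} \<noteq> {}"
proof -
  obtain x :: "complex ^ 'n" where "norm x = 1"
    using vector_choose_size[of 1] by auto
  then show ?thesis by (auto simp: hnorm_eq_norm)
qed

lemma eigenvalue_le_num_rad: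
  fixes T :: "complex ^ 'n \<Rightarrow> complex ^ 'n"
  assumes scale: "\<And>c x. T (c *s x) = c *s T x"
    and bdd: "bdd_above {cmod (hinner (T x) x) | x. hnorm x = 1}"
    and "x \<noteq> 0" and eig: "T x = l *s x"
  shows "cmod l \<le> num_rad T"
proof -
  define y where "y = of_real (1 / norm x) *s x"
  have "hinner y y = of_real (1 / norm x) * of_real (1 / norm x) * hinner x x"
    by (simp add: y_def hinner_scale_left hinner_scale_right)
  also have "\<dots> = 1"
    using \<open>x \<noteq> 0\<close> by (simp add: hinner_self power2_eq_square)
  finally have "hinner y y = 1" .
  then have "hnorm y = 1" by (simp add: hnorm_def)
  moreover have "hinner (T y) y = l"
    using \<open>hinner y y = 1\<close>
    by (simp add: y_def scale eig hinner_scale_left hinner_scale_right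
        vector_smult_assoc[symmetric] mult.commute)
  ultimately have "cmod l \<in> {cmod (hinner (T x) x) | x. hnorm x = 1}" by force
  then show ?thesis unfolding num_rad_def using bdd by (rule cSup_upper)
qed

lemma bdd_above_eigenvalues:
  fixes T :: "complex ^ 'n \<Rightarrow> complex ^ 'n"
  assumes scale: "\<And>c x. T (c *s x) = c *s T x"
    and bdd: "bdd_above {cmod (hinner (T x) x) | x. hnorm x = 1}"
  shows "bdd_above {cmod l | l. \<exists>x. x \<noteq> 0 \<and> T x = l *s x}"
  using eigenvalue_le_num_rad[OF scale bdd] by (intro bdd_aboveI[of _ "num_rad T"]) blast

lemma eigenvalue_le_spec_rad:
  fixes T :: "complex ^ 'n \<Rightarrow> complex ^ 'n"
  assumes scale: "\<And>c x. T (c *s x) = c *s T x"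
    and bdd: "bdd_above {cmod (hinner (T x) x) | x. hnorm x = 1}"
    and "x \<noteq> 0" and "T x = l *s x"
  shows "cmod l \<le> spec_rad T"
  unfolding spec_rad_def using assms(3,4)
  by (intro cSup_upper[OF _ bdd_above_eigenvalues[OF scale bdd]]) blast

lemma
  fixes T :: "complex ^ 'n \<Rightarrow> complex ^ 'n"
  assumes scale: "\<And>c x. T (c *s x) = c *s T x"
    and bdd: "bdd_above {cmod (hinner (T x) x) | x. hnorm x = 1}"
    and eig: "\<exists>l x. x \<noteq> 0 \<and> T x = l *s x"
  shows spec_rad_le_num_rad: "spec_rad T \<le> num_rad T"
    and spec_rad_nonneg: "0 \<le> spec_rad T"
proof -
  show "spec_rad T \<le> num_rad T"
    unfolding spec_rad_def using eig eigenvalue_le_num_rad[OF scale bdd]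
    by (intro cSup_least) blast+
  from eig obtain l x where "x \<noteq> 0" and "T x = l *s x" by blast
  then have "cmod l \<le> spec_rad T" by (rule eigenvalue_le_spec_rad[OF scale bdd])
  then show "0 \<le> spec_rad T" using norm_ge_zero[of l] by linarith
qed

lemma E_op_scale: "E_op f g i (c *s x) = c *s E_op f g i x"
  by (simp add: E_op_def hinner_scale_left vector_smult_assoc)

lemma bdd_above_numerical_range_E_op:
  "bdd_above {cmod (hinner (E_op f g i x) x) | x. hnorm x = 1}"
proof (rule bdd_aboveI)
  fix r assume "r \<in> {cmod (hinner (E_op f g i x) x) | x. hnorm x = 1}"
  then obtain x where "norm x = 1" and r: "r = cmod (hinner (E_op f g i x) x)"
    by (auto simp: hnorm_eq_norm)
  have "r = cmod (hinner x (f i)) * cmod (hinner (g i) x)"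
    by (simp add: r E_op_def hinner_scale_left norm_mult)
  also have "\<dots> \<le> (norm x * norm (f i)) * (norm (g i) * norm x)"
    by (intro mult_mono hinner_Cauchy_Schwarz) auto
  finally show "r \<le> norm (f i) * norm (g i)" using \<open>norm x = 1\<close> by simp
qed

lemma E_op_has_eigenvalue:
  fixes f g :: "nat \<Rightarrow> complex ^ 'n"
  shows "\<exists>l x. x \<noteq> 0 \<and> E_op f g i x = l *s x"
proof (cases "g i = 0")
  case True
  obtain x :: "complex ^ 'n" where "norm x = 1"
    using vector_choose_size[of 1] by auto
  then have "x \<noteq> 0 \<and> E_op f g i x = 0 *s x"
    using True by (auto simp: E_op_def)
  then show ?thesis by blast
next
  case False
  then show ?thesis by (auto simp: E_op_def)
qed

lemma spec_rad_E_op_le_num_rad: "spec_rad (E_op f g i) \<le> num_rad (E_op f g i)"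
  by (rule spec_rad_le_num_rad[OF E_op_scale bdd_above_numerical_range_E_op E_op_has_eigenvalue])

lemma spec_rad_E_op_nonneg: "0 \<le> spec_rad (E_op f g i)"
  by (rule spec_rad_nonneg[OF E_op_scale bdd_above_numerical_range_E_op E_op_has_eigenvalue])

lemma num_rad_E_op_positive_eq_spec_rad:
  assumes g: "g i = of_real c *s f i" and "c \<ge> 0"
  shows "num_rad (E_op f g i) = spec_rad (E_op f g i)"
proof (rule antisym[OF _ spec_rad_E_op_le_num_rad])
  have "num_rad (E_op f g i) \<le> c * (norm (f i))\<^sup>2"
    unfolding num_rad_def
  proof (rule cSup_least[OF numerical_range_nonempty])
    fix r assume "r \<in> {cmod (hinner (E_op f g i x) x) | x. hnorm x = 1}"
    then obtain x where "norm x = 1" and r: "r = cmod (hinner (E_op f g i x) x)"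
      by (auto simp: hnorm_eq_norm)
    have "r = c * (cmod (hinner x (f i)) * cmod (hinner (f i) x))"
      using \<open>c \<ge> 0\<close> by (simp add: r E_op_def g hinner_scale_left norm_mult)
    also have "\<dots> \<le> c * ((norm x * norm (f i)) * (norm (f i) * norm x))"
      by (intro mult_left_mono mult_mono hinner_Cauchy_Schwarz \<open>c \<ge> 0\<close>) auto
    finally show "r \<le> c * (norm (f i))\<^sup>2" using \<open>norm x = 1\<close> by (simp add: power2_eq_square)
  qed
  also have "c * (norm (f i))\<^sup>2 \<le> spec_rad (E_op f g i)"
  proof (cases "f i = 0")
    case True
    then show ?thesis using spec_rad_E_op_nonneg by simp
  next
    case False
    have "E_op f g i (f i) = of_real (c * (norm (f i))\<^sup>2) *s f i"
      by (simp add: E_op_def g hinner_self vector_smult_assoc mult.commute)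
    with False have "cmod (of_real (c * (norm (f i))\<^sup>2)) \<le> spec_rad (E_op f g i)"
      by (rule eigenvalue_le_spec_rad[OF E_op_scale bdd_above_numerical_range_E_op])
    moreover have "cmod (of_real (c * (norm (f i))\<^sup>2)) = c * (norm (f i))\<^sup>2"
      using \<open>c \<ge> 0\<close> by (simp only: norm_of_real) simp
    ultimately show ?thesis by simp
  qed
  finally show "num_rad (E_op f g i) \<le> spec_rad (E_op f g i)" .
qed

lemma power_mean_mono:
  fixes a b :: "nat \<Rightarrow> real"
  assumes "\<And>i. 0 \<le> a i" and "\<And>i. a i \<le> b i" and "p > 0"
  shows "((1 / real N) * (\<Sum>i<N. a i powr p)) powr (1 / p)
       \<le> ((1 / real N) * (\<Sum>i<N. b i powr p)) powr (1 / p)"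
proof -
  have "(\<Sum>i<N. a i powr p) \<le> (\<Sum>i<N. b i powr p)"
    by (intro sum_mono powr_mono2) (use assms in auto)
  then show ?thesis
    by (intro powr_mono2 mult_left_mono mult_nonneg_nonneg sum_nonneg) (use assms in auto)
qed

lemma AE_R_le_AE_N: "p > 0 \<Longrightarrow> AE_R p f g N \<le> AE_N p f g N"
  unfolding AE_N_def AE_R_def
  by (rule power_mean_mono[OF spec_rad_E_op_nonneg spec_rad_E_op_le_num_rad])

lemma AE_N_eq_AE_R_positive:
  assumes "\<And>i. g i = of_real c *s f i" and "c \<ge> 0"
  shows "AE_N p f g N = AE_R p f g N"
proof -
  have "num_rad (E_op f g i) = spec_rad (E_op f g i)" for i
    using assms by (rule num_rad_E_op_positive_eq_spec_rad)
  then show ?thesis unfolding AE_N_def AE_R_def by simp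
qed

theorem proposition5p6:
  fixes f :: "nat \<Rightarrow> complex ^ 'n" and N :: nat and p :: real
  assumes "is_tight_frame f N"
    and "p > 1"
    and "canon_dual f N \<in> zeta_R p f N"
  shows "canon_dual f N \<in> zeta_N p f N"
proof -
  obtain c where "c > 0" and canon: "\<And>i. canon_dual f N i = of_real c *s f i"
    using canon_dual_tight_frame[OF assms(1)] by blast
  have dual: "is_dual f (canon_dual f N) N"
    and min_R: "\<And>h. is_dual f h N \<Longrightarrow> AE_R p f (canon_dual f N) N \<le> AE_R p f h N"
    using assms(3) unfolding zeta_R_def by auto
  have "AE_N p f (canon_dual f N) N \<le> AE_N p f h N" if "is_dual f h N" for h
  proof -
    have "AE_N p f (canon_dual f N) N = AE_R p f (canon_dual f N) N"
      using AE_N_eq_AE_R_positive[OF canon] \<open>c > 0\<close> by simp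
    also have "\<dots> \<le> AE_R p f h N" using min_R[OF that] .
    also have "\<dots> \<le> AE_N p f h N" using \<open>p > 1\<close> by (intro AE_R_le_AE_N) simp
    finally show ?thesis .
  qed
  with dual show ?thesis unfolding zeta_N_def by blast
qed

end
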